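(* Let $f_1,f_2:\mathbb R^d\to\mathbb R$ be convex with $\nabla f_i$ globally Lipschitz continuous with modulus $L_i>0$ ($i=1,2$), let $f_3:\mathbb R^d\to\mathbb R\cup\{+\infty\}$ be proper and lower semicontinuous, and assume $\varphi:=f_1+f_2+f_3$ has a nonempty set of minimizers. Let $\lambda\in(0,2)$, $\underline\alpha:=\frac{2\lambda-3+\sqrt{9-4\lambda}}{2}$, $\alpha\in(\underline\alpha,1)$, and let $\gamma\in\Gamma$. Then for the sequences $(z_1^k,z_2^k)_k$ generated by the relaxed Ryu splitting method there exists $M=M(\gamma)>0$ such that for all $k\ge0$, $$\varphi_\gamma^{\mathrm{Ryu}}(z_1^k,z_2^k)\ge\varphi_\gamma^{\mathrm{Ryu}}(z_1^{k+1},z_2^{k+1})+M\big(\|z_1^{k+1}-z_1^k\|^2+\|z_2^{k+1}-z_2^k\|^2\big).$$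
   Context: For $h:\mathbb R^d\to\mathbb R\cup\{+\infty\}$ and $\gamma>0$, $\mathrm{prox}_{\gamma h}(z):=\operatorname{argmin}_{y}\{h(y)+\frac{1}{2\gamma}\|y-z\|^2\}$. The relaxed Ryu splitting method: given $z_1^0,z_2^0\in\mathbb R^d$, for $k\ge0$, $x_1^k=\mathrm{prox}_{\gamma f_1}(z_1^k)$, $x_2^k=\mathrm{prox}_{\frac{\gamma}{\alpha}f_2}(\frac{z_2^k}{\alpha}+x_1^k)$, $x_3^k\in\mathrm{prox}_{\gamma f_3}(x_1^k-z_1^k+x_2^k-z_2^k)$, $z_1^{k+1}=z_1^k+\lambda(x_3^k-x_1^k)$, $z_2^{k+1}=z_2^k+\lambda(x_3^k-x_2^k)$. Relaxed Ryu envelope: with $\gamma_1=\gamma/\alpha$, $\gamma_2=\gamma/(1-\alpha)$, and for $(z_1,z_2)$, $x_1=\mathrm{prox}_{\gamma f_1}(z_1)$, $x_2=\mathrm{prox}_{\frac{\gamma}{\alpha}f_2}(\frac{z_2}{\alpha}+x_1)$, $\varphi_\gamma^{\mathrm{Ryu}}(z_1,z_2):=\min_{y}\{f_3(y)+\sum_{i=1}^2[f_i(x_i)+\langle y-x_i,\nabla f_i(x_i)\rangle+\frac{1}{2\gamma_i}\|y-x_i\|^2]\}$. Stepsize set: fix $\epsilon_1\in I_1:=\big(\frac{\alpha}{2\alpha-\lambda},\frac{2-\lambda}{1-\alpha}\big)$ and $\epsilon_2\in I_2:=\big(\frac{\alpha L_2}{\lambda},+\infty\big)$, and set $\bar\gamma_0:=\frac{\lambda}{2L_1}$,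 $\bar\gamma_1:=\frac{\lambda}{2L_2}-\frac{\alpha}{2\epsilon_2}$, $\bar\gamma_2:=\frac{\alpha(2-\lambda-(1-\alpha)\epsilon_1)}{\alpha\epsilon_2+2(1-\alpha)L_1}$, $\bar\gamma_3:=\frac{(1-\alpha)(\epsilon_1(2\alpha-\lambda)-\alpha)}{2\alpha L_2\epsilon_1}$, and $\Gamma:=(0,\min\{\bar\gamma_0,\bar\gamma_1\}]\cap\big(0,\min\{\bar\gamma_2,\bar\gamma_3,\frac{1}{L_1+L_2}\}\big)$. *)

theory Defs
  imports "HOL-Analysis.Analysis"
begin

definition proper_fun :: "('a \<Rightarrow> ereal) \<Rightarrow> bool" where
  "proper_fun h \<longleftrightarrow> (\<forall>x. h x \<noteq> -\<infinity>) \<and> (\<exists>x. h x \<noteq> \<infinity>)"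

definition lsc_fun :: "('a::topological_space \<Rightarrow> ereal) \<Rightarrow> bool" where
  "lsc_fun h \<longleftrightarrow> (\<forall>x. h x \<le> Liminf (at x) h)"

definition prox_set :: "('a::real_normed_vector \<Rightarrow> ereal) \<Rightarrow> real \<Rightarrow> 'a \<Rightarrow> 'a set" where
  "prox_set h \<gamma> z = {y. \<forall>u. h y + ereal ((norm (y - z))\<^sup>2 / (2 * \<gamma>))
                              \<le> h u + ereal ((norm (u - z))\<^sup>2 / (2 * \<gamma>))}"

(* single-valued proximal map (used for real-valued convex functions, where the argmin is unique) *)
definition prox :: "('a::real_normed_vector \<Rightarrow> real) \<Rightarrow> real \<Rightarrow> 'a \<Rightarrow> 'a" where
  "prox h \<gamma> z = (THE y. y \<in> prox_set (\<lambda>x. ereal (h x)) \<gamma> z)"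

(* relaxed Ryu envelope; g1, g2 are the gradients of f1, f2 *)
definition ryu_envelope ::
  "('a::real_inner \<Rightarrow> real) \<Rightarrow> ('a \<Rightarrow> 'a) \<Rightarrow> ('a \<Rightarrow> real) \<Rightarrow> ('a \<Rightarrow> 'a) \<Rightarrow> ('a \<Rightarrow> ereal)
    \<Rightarrow> real \<Rightarrow> real \<Rightarrow> 'a \<Rightarrow> 'a \<Rightarrow> ereal" where
  "ryu_envelope f1 g1 f2 g2 f3 \<alpha> \<gamma> z1 z2 =
     (let \<gamma>1 = \<gamma> / \<alpha>; \<gamma>2 = \<gamma> / (1 - \<alpha>);
          x1 = prox f1 \<gamma> z1;
          x2 = prox f2 (\<gamma> / \<alpha>) (z2 /\<^sub>R \<alpha> + x1)
      in (INF y. f3 y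
            + ereal (f1 x1 + inner (y - x1) (g1 x1) + (norm (y - x1))\<^sup>2 / (2 * \<gamma>1))
            + ereal (f2 x2 + inner (y - x2) (g2 x2) + (norm (y - x2))\<^sup>2 / (2 * \<gamma>2))))"

definition ryu_Gamma :: "real \<Rightarrow> real \<Rightarrow> real \<Rightarrow> real \<Rightarrow> real \<Rightarrow> real \<Rightarrow> real set" where
  "ryu_Gamma lam \<alpha> L1 L2 \<epsilon>1 \<epsilon>2 =
     (let g0 = lam / (2 * L1);
          g1 = lam / (2 * L2) - \<alpha> / (2 * \<epsilon>2);
          g2 = \<alpha> * (2 - lam - (1 - \<alpha>) * \<epsilon>1) / (\<alpha> * \<epsilon>2 + 2 * (1 - \<alpha>) * L1);
          g3 = (1 - \<alpha>) * (\<epsilon>1 * (2 * \<alpha> - lam) - \<alpha>) / (2 * \<alpha> * L2 * \<epsilon>1)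
      in {0<..min g0 g1} \<inter> {0<..<min (min g2 g3) (1 / (L1 + L2))})"

end

theory Submission
  imports Defs
begin

(* On the optimality conditions of the first two prox steps, the function minimised in the
   envelope is f3 plus a square centred at x1 - z1 + x2 - z2, the argument of the third prox
   step, up to a constant.  Hence the envelope at (z1, z2) is attained at x3, while the envelope
   at the next iterate is at most the next model evaluated at the same x3, and the decrease
   reduces to comparing two quadratic models at x3.  With u_i = x_i' - x_i and d_i the gradient
   increments, lam times the model difference is bounded below, via cocoercivity of both
   gradients, monotonicity of the second one and two Young inequalities with weights eps1, eps2,
   by coeff1 |u1|^2 + coeff2 |u2|^2; positivity of coeff1 and coeff2 is exactly the condition
   gamma < min(gamma2, gamma3) in Gamma.  Finally the z-increments are u1 + gamma d1 and
   alpha (u2 - u1) + gamma d2, whose squared norms are bounded by a multiple of |u1|^2 + |u2|^2. *)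

lemma has_real_derivative_along_line:
  fixes f :: "'a::real_inner \<Rightarrow> real"
  assumes grad: "\<And>x. (f has_derivative (\<lambda>h. inner (g x) h)) (at x)"
  shows "((\<lambda>s. f (x + s *\<^sub>R d)) has_real_derivative inner (g (x + t *\<^sub>R d)) d) (at t)"
proof -
  have "((\<lambda>s. x + s *\<^sub>R d) has_derivative (\<lambda>h. h *\<^sub>R d)) (at t)"
    by (auto intro!: derivative_eq_intros)
  from has_derivative_compose[OF this grad] show ?thesis
    by (simp add: has_field_derivative_def mult_commute_abs)
qed

lemma convex_on_along_line:
  fixes f :: "'a::real_vector \<Rightarrow> real"
  assumes conv: "convex_on UNIV f"
  shows "convex_on UNIV (\<lambda>t. f (x + t *\<^sub>R d))"
proof (rule convex_onI)
  fix s t a :: real assume a: "0 < a" "a < 1"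
  have "x + ((1 - a) *\<^sub>R s + a *\<^sub>R t) *\<^sub>R d = (1 - a) *\<^sub>R (x + s *\<^sub>R d) + a *\<^sub>R (x + t *\<^sub>R d)"
    by (simp add: algebra_simps)
  then show "f (x + ((1 - a) *\<^sub>R s + a *\<^sub>R t) *\<^sub>R d) \<le> (1 - a) * f (x + s *\<^sub>R d) + a * f (x + t *\<^sub>R d)"
    using convex_onD[OF conv, of a "x + s *\<^sub>R d" "x + t *\<^sub>R d"] a by simp
qed simp

lemma convex_on_above_linearization:
  fixes f :: "'a::real_inner \<Rightarrow> real"
  assumes conv: "convex_on UNIV f"
    and grad: "\<And>x. (f has_derivative (\<lambda>h. inner (g x) h)) (at x)"
  shows "f x + inner (g x) (y - x) \<le> f y"
proof -
  let ?p = "\<lambda>t. f (x + t *\<^sub>R (y - x))"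
  have "(?p has_field_derivative inner (g x) (y - x)) (at 0 within UNIV)"
    using has_real_derivative_along_line[OF grad, of x "y - x" 0] by simp
  from convex_on_imp_above_tangent[OF convex_on_along_line[OF conv] _ _ _ this, of 1]
  have "inner (g x) (y - x) * (1 - 0) \<le> ?p 1 - ?p 0" by simp
  then show ?thesis by simp
qed

lemma lipschitz_gradient_below_quadratic:
  fixes f :: "'a::real_inner \<Rightarrow> real"
  assumes grad: "\<And>x. (f has_derivative (\<lambda>h. inner (g x) h)) (at x)"
    and lip: "L-lipschitz_on UNIV g"
  shows "f y \<le> f x + inner (g x) (y - x) + L / 2 * (norm (y - x))\<^sup>2"
proof -
  define d where "d = y - x"
  let ?p = "\<lambda>t. f (x + t *\<^sub>R d) - t * inner (g x) d - L / 2 * t\<^sup>2 * (norm d)\<^sup>2"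
  have "?p 1 \<le> ?p 0"
  proof (rule DERIV_nonpos_imp_nonincreasing[where f = ?p])
    fix t :: real assume t: "0 \<le> t" "t \<le> 1"
    have "inner (g (x + t *\<^sub>R d)) d - inner (g x) d = inner (g (x + t *\<^sub>R d) - g x) d"
      by (simp add: inner_diff_left)
    also have "\<dots> \<le> norm (g (x + t *\<^sub>R d) - g x) * norm d"
      by (rule norm_cauchy_schwarz)
    also have "\<dots> \<le> L * norm (t *\<^sub>R d) * norm d"
      using lipschitz_onD[OF lip, of "x + t *\<^sub>R d" x] by (simp add: dist_norm mult_right_mono)
    also have "\<dots> = L * t * (norm d)\<^sup>2"
      using t by (simp add: power2_eq_square)
    finally have "inner (g (x + t *\<^sub>R d)) d - inner (g x) d - L * t * (norm d)\<^sup>2 \<le> 0"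
      by simp
    moreover have "(?p has_real_derivative
        inner (g (x + t *\<^sub>R d)) d - inner (g x) d - L * t * (norm d)\<^sup>2) (at t)"
      by (rule derivative_eq_intros has_real_derivative_along_line[OF grad] | simp)+
    ultimately show "\<exists>y. (?p has_real_derivative y) (at t) \<and> y \<le> 0"
      by blast
  qed simp
  then show ?thesis by (simp add: d_def)
qed

lemma convex_lipschitz_gradient_cocoercive:
  fixes f :: "'a::real_inner \<Rightarrow> real"
  assumes conv: "convex_on UNIV f"
    and grad: "\<And>x. (f has_derivative (\<lambda>h. inner (g x) h)) (at x)"
    and lip: "L-lipschitz_on UNIV g" and L: "0 < L"
  shows "f x + inner (g x) (y - x) + (norm (g y - g x))\<^sup>2 / (2 * L) \<le> f y"
proof -
  txt \<open>Compare the linear lower bound at \<open>x\<close> with the quadratic upper bound at \<open>y\<close>, both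
    evaluated at the gradient step \<open>w\<close>.\<close>
  define w where "w = y - (1 / L) *\<^sub>R (g y - g x)"
  have "f x + inner (g x) (w - x) \<le> f w"
    by (rule convex_on_above_linearization[OF conv grad])
  moreover have "f w \<le> f y + inner (g y) (w - y) + L / 2 * (norm (w - y))\<^sup>2"
    by (rule lipschitz_gradient_below_quadratic[OF grad lip])
  moreover have "inner (g x) (w - x) = inner (g x) (y - x) + inner (g x) (w - y)"
    by (simp add: inner_diff_right)
  moreover have "inner (g y) (w - y) - inner (g x) (w - y) = - (norm (g y - g x))\<^sup>2 / L"
    using L by (simp add: w_def inner_diff_left inner_diff_right power2_norm_eq_inner
        inner_commute field_simps)
  moreover have "L / 2 * (norm (w - y))\<^sup>2 = (norm (g y - g x))\<^sup>2 / (2 * L)"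
  proof -
    have "norm (w - y) = norm (g y - g x) / L"
      using L by (simp add: w_def)
    then show ?thesis
      using L by (simp add: power2_eq_square field_simps)
  qed
  moreover have "(norm (g y - g x))\<^sup>2 / L - (norm (g y - g x))\<^sup>2 / (2 * L)
      = (norm (g y - g x))\<^sup>2 / (2 * L)"
    by (simp add: field_simps)
  ultimately show ?thesis
    by linarith
qed

lemma convex_gradient_monotone:
  fixes f :: "'a::real_inner \<Rightarrow> real"
  assumes conv: "convex_on UNIV f"
    and grad: "\<And>x. (f has_derivative (\<lambda>h. inner (g x) h)) (at x)"
  shows "0 \<le> inner (g y - g x) (y - x)"
  using convex_on_above_linearization[OF conv grad, of x y]
    convex_on_above_linearization[OF conv grad, of y x]
  by (simp add: inner_diff_left inner_diff_right)

lemma inner_le_young: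
  fixes a b :: "'a::real_inner"
  assumes e: "0 < e"
  shows "2 * inner a b \<le> e * (norm a)\<^sup>2 + (norm b)\<^sup>2 / e"
proof -
  have "0 \<le> (norm (e *\<^sub>R a - b))\<^sup>2" by simp
  also have "\<dots> = e * (e * (norm a)\<^sup>2 + (norm b)\<^sup>2 / e - 2 * inner a b)"
    using e unfolding power2_norm_eq_inner
    by (simp add: inner_diff_left inner_diff_right inner_commute field_simps)
  finally show ?thesis
    using e by (simp add: zero_le_mult_iff)
qed

lemma norm_add_power2_le: "(norm (a + b))\<^sup>2 \<le> 2 * (norm a)\<^sup>2 + 2 * (norm (b::'a::real_inner))\<^sup>2"
  using inner_le_young[of 1 a b]
  by (simp add: power2_norm_eq_inner inner_add_left inner_add_right inner_commute)

lemma mem_prox_set_real_iff: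
  "y \<in> prox_set (\<lambda>x. ereal (f x)) c z \<longleftrightarrow>
     (\<forall>u. f y + (norm (y - z))\<^sup>2 / (2 * c) \<le> f u + (norm (u - z))\<^sup>2 / (2 * c))"
  by (simp add: prox_set_def)

lemma prox_set_gradient_eq:
  fixes f :: "'a::real_inner \<Rightarrow> real"
  assumes grad: "\<And>x. (f has_derivative (\<lambda>h. inner (g x) h)) (at x)"
    and c: "0 < c" and x: "x \<in> prox_set (\<lambda>x. ereal (f x)) c z"
  shows "c *\<^sub>R g x = z - x"
proof -
  let ?H = "\<lambda>w. f w + inner (w - z) (w - z) / (2 * c)"
  have "(?H has_derivative (\<lambda>h. inner (g x) h + (inner h (x - z) + inner (x - z) h) / (2 * c))) (at x)"
    using c by (auto intro!: derivative_eq_intros grad simp: field_simps)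
  moreover have "\<forall>\<^sub>F y in at x. ?H x \<le> ?H y"
    using x by (simp add: mem_prox_set_real_iff power2_norm_eq_inner)
  ultimately have "(\<lambda>h. inner (g x) h + (inner h (x - z) + inner (x - z) h) / (2 * c)) = (\<lambda>h. 0)"
    by (rule has_derivative_local_min)
  then have stationary: "inner (g x) h + (inner h (x - z) + inner (x - z) h) / (2 * c) = 0" for h
    by metis
  define v where "v = c *\<^sub>R g x + (x - z)"
  have "inner v v = inner (c *\<^sub>R g x + (x - z)) v"
    by (simp only: v_def)
  also have "\<dots> = c * inner (g x) v + inner (x - z) v"
    by (simp only: inner_add_left inner_scaleR_left)
  also have "\<dots> = 0"
    using stationary[of v] c by (simp add: inner_commute field_simps)
  finally have "v = 0" by simp
  then show ?thesis by (simp add: v_def algebra_simps)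
qed

lemma prox_set_nonempty:
  fixes f :: "'a::euclidean_space \<Rightarrow> real"
  assumes conv: "convex_on UNIV f"
    and grad: "\<And>x. (f has_derivative (\<lambda>h. inner (g x) h)) (at x)"
    and c: "0 < c"
  shows "\<exists>x. x \<in> prox_set (\<lambda>x. ereal (f x)) c z"
proof -
  let ?H = "\<lambda>w. f w + (norm (w - z))\<^sup>2 / (2 * c)"
  define R where "R = 2 * c * norm (g z)"
  have "continuous_on (cball z R) ?H"
    using c by (intro continuous_at_imp_continuous_on ballI continuous_intros
        has_derivative_continuous[OF grad]) auto
  moreover have "z \<in> cball z R"
    using c by (simp add: R_def)
  ultimately obtain x where "x \<in> cball z R" and x_min: "\<And>y. y \<in> cball z R \<Longrightarrow> ?H x \<le> ?H y"
    using continuous_attains_inf[OF compact_cball] by blast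
  have "?H x \<le> ?H u" for u
  proof (cases "u \<in> cball z R")
    case False
    txt \<open>Outside the ball the linear lower bound at \<open>z\<close> already exceeds \<open>f z = ?H z\<close>.\<close>
    then have "2 * c * norm (g z) * norm (u - z) \<le> norm (u - z) * norm (u - z)"
      by (intro mult_right_mono) (auto simp: R_def dist_norm norm_minus_commute)
    then have "norm (g z) * norm (u - z) \<le> (norm (u - z))\<^sup>2 / (2 * c)"
      using c by (simp add: field_simps power2_eq_square)
    moreover have "f z + inner (g z) (u - z) \<le> f u"
      by (rule convex_on_above_linearization[OF conv grad])
    moreover have "- (norm (g z) * norm (u - z)) \<le> inner (g z) (u - z)"
      using norm_cauchy_schwarz[of "- g z" "u - z"] by simp
    moreover have "?H x \<le> ?H z"
      using x_min \<open>z \<in> cball z R\<close> by blast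
    ultimately show ?thesis by simp
  qed (use x_min in blast)
  then show ?thesis
    by (auto simp: mem_prox_set_real_iff)
qed

lemma prox_gradient_eq:
  fixes f :: "'a::euclidean_space \<Rightarrow> real"
  assumes conv: "convex_on UNIV f"
    and grad: "\<And>x. (f has_derivative (\<lambda>h. inner (g x) h)) (at x)"
    and c: "0 < c"
  shows "c *\<^sub>R g (prox f c z) = z - prox f c z"
proof -
  obtain x where x: "x \<in> prox_set (\<lambda>x. ereal (f x)) c z"
    using prox_set_nonempty[OF conv grad c] by blast
  have "y = x" if y: "y \<in> prox_set (\<lambda>x. ereal (f x)) c z" for y
  proof -
    txt \<open>Both points satisfy the optimality condition; monotonicity of \<open>g\<close> forces them to agree.\<close>
    have "c *\<^sub>R (g y - g x) = - (y - x)"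
      using prox_set_gradient_eq[OF grad c x] prox_set_gradient_eq[OF grad c y]
      by (simp add: algebra_simps)
    then have "c * inner (g y - g x) (y - x) = - inner (y - x) (y - x)"
      by (metis inner_minus_left inner_scaleR_left)
    moreover have "0 \<le> inner (g y - g x) (y - x)"
      by (rule convex_gradient_monotone[OF conv grad])
    ultimately have "inner (y - x) (y - x) \<le> 0"
      using c by (metis mult_nonneg_nonneg less_imp_le neg_0_le_iff_le)
    then have "y - x = 0"
      by (metis antisym inner_eq_zero_iff inner_ge_zero)
    then show "y = x" by simp
  qed
  with x have "prox f c z = x"
    unfolding prox_def by blast
  then show ?thesis
    using prox_set_gradient_eq[OF grad c x] by simp
qed

definition quadratic_model :: "('a::real_inner \<Rightarrow> real) \<Rightarrow> ('a \<Rightarrow> 'a) \<Rightarrow> real \<Rightarrow> 'a \<Rightarrow> 'a \<Rightarrow> real" where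
  "quadratic_model f g t x y = f x + inner (y - x) (g x) + (norm (y - x))\<^sup>2 / (2 * t)"

definition ryu_model ::
  "('a::real_inner \<Rightarrow> real) \<Rightarrow> ('a \<Rightarrow> 'a) \<Rightarrow> ('a \<Rightarrow> real) \<Rightarrow> ('a \<Rightarrow> 'a) \<Rightarrow> real \<Rightarrow> real
    \<Rightarrow> 'a \<Rightarrow> 'a \<Rightarrow> 'a \<Rightarrow> real" where
  "ryu_model f1 g1 f2 g2 \<alpha> \<gamma> x1 x2 y =
     quadratic_model f1 g1 (\<gamma> / \<alpha>) x1 y + quadratic_model f2 g2 (\<gamma> / (1 - \<alpha>)) x2 y"

lemma ryu_envelope_eq_INF_model:
  assumes "x1 = prox f1 \<gamma> z1" and "x2 = prox f2 (\<gamma> / \<alpha>) (z2 /\<^sub>R \<alpha> + x1)"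
  shows "ryu_envelope f1 g1 f2 g2 f3 \<alpha> \<gamma> z1 z2 = (INF y. f3 y + ereal (ryu_model f1 g1 f2 g2 \<alpha> \<gamma> x1 x2 y))"
  using assms by (simp add: ryu_envelope_def ryu_model_def quadratic_model_def Let_def add.assoc)

lemma quadratic_model_diff:
  "quadratic_model f g t x y - quadratic_model f g t x' y =
     (f x - f x' - inner (g x') (x - x')) - inner (y - x) (g x' - g x)
       + (2 * inner (y - x) (x' - x) - (norm (x' - x))\<^sup>2) / (2 * t)"
proof -
  have "quadratic_model f g t x y - quadratic_model f g t x' y =
      (f x - f x' - inner (g x') (x - x')) - inner (y - x) (g x' - g x)
        + ((norm (y - x))\<^sup>2 - (norm (y - x'))\<^sup>2) / (2 * t)"
    unfolding quadratic_model_def diff_divide_distrib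
    by (simp add: inner_diff_left inner_diff_right inner_commute)
  moreover have "(norm (y - x))\<^sup>2 - (norm (y - x'))\<^sup>2 = 2 * inner (y - x) (x' - x) - (norm (x' - x))\<^sup>2"
    by (simp add: power2_norm_eq_inner inner_diff_left inner_diff_right inner_commute)
  ultimately show ?thesis
    by (simp only:)
qed

text \<open>The centre \<open>x1 - z1 + x2 - z2\<close> is the argument of the third prox step, which therefore
  minimises \<open>f3\<close> plus the model.\<close>

lemma ryu_model_eq_shifted_square:
  fixes x1 x2 z1 z2 :: "'a::real_inner"
  assumes \<gamma>: "0 < \<gamma>" and \<alpha>: "\<alpha> \<noteq> 0" "\<alpha> \<noteq> 1"
    and opt1: "\<gamma> *\<^sub>R g1 x1 = z1 - x1" and opt2: "\<gamma> *\<^sub>R g2 x2 = z2 + \<alpha> *\<^sub>R x1 - \<alpha> *\<^sub>R x2"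
  shows "\<exists>C. \<forall>y. ryu_model f1 g1 f2 g2 \<alpha> \<gamma> x1 x2 y = (norm (y - (x1 - z1 + x2 - z2)))\<^sup>2 / (2 * \<gamma>) + C"
proof -
  define w where "w = x1 - z1 + x2 - z2"
  have "z1 = x1 + \<gamma> *\<^sub>R g1 x1" and "z2 = \<gamma> *\<^sub>R g2 x2 - \<alpha> *\<^sub>R x1 + \<alpha> *\<^sub>R x2"
    using opt1 opt2 by (simp_all add: algebra_simps)
  then have w_eq: "w = \<alpha> *\<^sub>R x1 + (1 - \<alpha>) *\<^sub>R x2 - \<gamma> *\<^sub>R (g1 x1 + g2 x2)"
    by (simp add: w_def algebra_simps)
  have "ryu_model f1 g1 f2 g2 \<alpha> \<gamma> x1 x2 y - (norm (y - w))\<^sup>2 / (2 * \<gamma>) =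
      ryu_model f1 g1 f2 g2 \<alpha> \<gamma> x1 x2 0 - (norm w)\<^sup>2 / (2 * \<gamma>)" for y
    unfolding w_eq ryu_model_def quadratic_model_def using \<gamma> \<alpha>
    by (simp add: power2_norm_eq_inner inner_add_left inner_add_right inner_diff_left
        inner_diff_right inner_commute field_simps)
  then show ?thesis
    unfolding w_def[symmetric] by (metis add_diff_cancel_left' add.commute diff_add_cancel)
qed

lemma prox_set_attains_INF:
  fixes h :: "'a::real_normed_vector \<Rightarrow> ereal"
  assumes x: "x \<in> prox_set h \<gamma> w" and Q: "\<And>y. Q y = (norm (y - w))\<^sup>2 / (2 * \<gamma>) + C"
  shows "(INF y. h y + ereal (Q y)) = h x + ereal (Q x)"
proof (rule antisym)
  show "(INF y. h y + ereal (Q y)) \<le> h x + ereal (Q x)"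
    by (rule INF_lower) simp
  show "h x + ereal (Q x) \<le> (INF y. h y + ereal (Q y))"
  proof (rule INF_greatest)
    fix y
    have "h x + ereal (Q x) = (h x + ereal ((norm (x - w))\<^sup>2 / (2 * \<gamma>))) + ereal C"
      by (simp add: Q add.assoc)
    also have "\<dots> \<le> (h y + ereal ((norm (y - w))\<^sup>2 / (2 * \<gamma>))) + ereal C"
      using x by (intro add_right_mono) (simp add: prox_set_def)
    also have "\<dots> = h y + ereal (Q y)"
      by (simp add: Q add.assoc)
    finally show "h x + ereal (Q x) \<le> h y + ereal (Q y)" .
  qed
qed

lemma inner_le_of_norm_le:
  fixes u d :: "'a::real_inner"
  assumes "norm d \<le> L * norm u"
  shows "inner u d \<le> L * (norm u)\<^sup>2"
proof -
  have "inner u d \<le> norm u * norm d" by (rule norm_cauchy_schwarz)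
  also have "\<dots> \<le> norm u * (L * norm u)" using assms by (simp add: mult_left_mono)
  finally show ?thesis by (simp add: power2_eq_square algebra_simps)
qed

locale ryu_parameters =
  fixes lam \<alpha> \<gamma> \<epsilon>1 \<epsilon>2 L1 L2 :: real
  assumes lam_pos: "0 < lam" and alpha_pos: "0 < \<alpha>" and alpha_less_one: "\<alpha> < 1"
    and eps1_pos: "0 < \<epsilon>1" and eps2_pos: "0 < \<epsilon>2" and L1_pos: "0 < L1" and L2_pos: "0 < L2"
    and stepsize: "\<gamma> \<in> ryu_Gamma lam \<alpha> L1 L2 \<epsilon>1 \<epsilon>2"
begin

lemma gamma_pos: "0 < \<gamma>"
  and gamma_le_L1: "\<gamma> \<le> lam / (2 * L1)"
  and gamma_le_L2: "\<gamma> \<le> lam / (2 * L2) - \<alpha> / (2 * \<epsilon>2)"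
  and gamma_less_2: "\<gamma> < \<alpha> * (2 - lam - (1 - \<alpha>) * \<epsilon>1) / (\<alpha> * \<epsilon>2 + 2 * (1 - \<alpha>) * L1)"
  and gamma_less_3: "\<gamma> < (1 - \<alpha>) * (\<epsilon>1 * (2 * \<alpha> - lam) - \<alpha>) / (2 * \<alpha> * L2 * \<epsilon>1)"
  using stepsize by (auto simp: ryu_Gamma_def Let_def)

definition coeff1 :: real where
  "coeff1 = \<alpha> * (2 - lam) / (2 * \<gamma>) - (1 - \<alpha>) * \<alpha> * \<epsilon>1 / (2 * \<gamma>) - (1 - \<alpha>) * L1 - \<alpha> * \<epsilon>2 / 2"

definition coeff2 :: real where
  "coeff2 = (1 - \<alpha>) * (2 * \<alpha> - lam) / (2 * \<gamma>) - (1 - \<alpha>) * \<alpha> / (2 * \<gamma> * \<epsilon>1) - \<alpha> * L2"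

lemma coeff1_pos: "0 < coeff1"
proof -
  have "0 < \<alpha> * \<epsilon>2 + 2 * (1 - \<alpha>) * L1"
    using alpha_pos alpha_less_one eps2_pos L1_pos by (simp add: add_pos_pos)
  then have "\<gamma> * (\<alpha> * \<epsilon>2 + 2 * (1 - \<alpha>) * L1) < \<alpha> * (2 - lam - (1 - \<alpha>) * \<epsilon>1)"
    using gamma_less_2 by (simp add: field_simps)
  moreover have "coeff1 = (\<alpha> * (2 - lam - (1 - \<alpha>) * \<epsilon>1) - \<gamma> * (\<alpha> * \<epsilon>2 + 2 * (1 - \<alpha>) * L1)) / (2 * \<gamma>)"
    unfolding coeff1_def using gamma_pos by (simp add: field_simps)
  ultimately show ?thesis
    using gamma_pos by simp
qed

lemma coeff2_pos: "0 < coeff2"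
proof -
  have "0 < 2 * \<alpha> * L2 * \<epsilon>1"
    using alpha_pos L2_pos eps1_pos by simp
  then have "\<gamma> * (2 * \<alpha> * L2 * \<epsilon>1) < (1 - \<alpha>) * (\<epsilon>1 * (2 * \<alpha> - lam) - \<alpha>)"
    using gamma_less_3 by (simp add: field_simps)
  moreover have "coeff2 = ((1 - \<alpha>) * (\<epsilon>1 * (2 * \<alpha> - lam) - \<alpha>) - \<gamma> * (2 * \<alpha> * L2 * \<epsilon>1)) / (2 * \<gamma> * \<epsilon>1)"
    unfolding coeff2_def using gamma_pos eps1_pos by (simp add: field_simps)
  ultimately show ?thesis
    using gamma_pos eps1_pos by simp
qed

definition ryu_form :: "'a::real_inner \<Rightarrow> 'a \<Rightarrow> 'a \<Rightarrow> 'a \<Rightarrow> real" where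
  "ryu_form u1 u2 d1 d2 =
     \<alpha> * (2 - lam) / (2 * \<gamma>) * (norm u1)\<^sup>2 - (1 - \<alpha>) * inner u1 d1 - \<gamma> * (norm d1)\<^sup>2
     + (1 - 2 * \<alpha>) * inner u2 d2 + \<alpha> * inner u1 d2 - \<gamma> * (norm d2)\<^sup>2
     + (1 - \<alpha>) * (2 * \<alpha> - lam) / (2 * \<gamma>) * (norm u2)\<^sup>2 - (1 - \<alpha>) * \<alpha> / \<gamma> * inner u1 u2"

lemma lam_model_increment_eq_ryu_form:
  fixes u1 u2 d1 d2 v1 v2 :: "'a::real_inner"
  assumes v1: "lam *\<^sub>R v1 = u1 + \<gamma> *\<^sub>R d1" and v2: "lam *\<^sub>R v2 = \<alpha> *\<^sub>R (u2 - u1) + \<gamma> *\<^sub>R d2"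
  shows "lam * (\<alpha> / (2 * \<gamma>) * (2 * inner v1 u1 - (norm u1)\<^sup>2) - inner v1 d1
            + (1 - \<alpha>) / (2 * \<gamma>) * (2 * inner v2 u2 - (norm u2)\<^sup>2) - inner v2 d2)
         = ryu_form u1 u2 d1 d2"
proof -
  have s1: "lam * inner v1 u1 = (norm u1)\<^sup>2 + \<gamma> * inner u1 d1"
    using arg_cong[OF v1, of "\<lambda>w. inner w u1"]
    by (simp add: inner_add_right power2_norm_eq_inner inner_commute)
  have s2: "lam * inner v1 d1 = inner u1 d1 + \<gamma> * (norm d1)\<^sup>2"
    using arg_cong[OF v1, of "\<lambda>w. inner w d1"]
    by (simp add: inner_add_left power2_norm_eq_inner)
  have s3: "lam * inner v2 u2 = \<alpha> * (norm u2)\<^sup>2 - \<alpha> * inner u1 u2 + \<gamma> * inner u2 d2"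
    using arg_cong[OF v2, of "\<lambda>w. inner w u2"]
    by (simp add: inner_add_right inner_diff_right power2_norm_eq_inner inner_commute right_diff_distrib)
  have s4: "lam * inner v2 d2 = \<alpha> * inner u2 d2 - \<alpha> * inner u1 d2 + \<gamma> * (norm d2)\<^sup>2"
    using arg_cong[OF v2, of "\<lambda>w. inner w d2"]
    by (simp add: inner_add_left inner_diff_left power2_norm_eq_inner algebra_simps)
  have "lam * (\<alpha> / (2 * \<gamma>) * (2 * inner v1 u1 - (norm u1)\<^sup>2) - inner v1 d1
            + (1 - \<alpha>) / (2 * \<gamma>) * (2 * inner v2 u2 - (norm u2)\<^sup>2) - inner v2 d2)
      = \<alpha> / (2 * \<gamma>) * (2 * (lam * inner v1 u1) - lam * (norm u1)\<^sup>2) - lam * inner v1 d1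
            + (1 - \<alpha>) / (2 * \<gamma>) * (2 * (lam * inner v2 u2) - lam * (norm u2)\<^sup>2) - lam * inner v2 d2"
    by (simp add: algebra_simps)
  also have "\<dots> = ryu_form u1 u2 d1 d2"
    unfolding s1 s2 s3 s4 ryu_form_def using gamma_pos by (simp add: field_simps)
  finally show ?thesis .
qed

lemma ryu_form_lower_bound:
  fixes u1 u2 d1 d2 :: "'a::real_inner"
  assumes lip1: "norm d1 \<le> L1 * norm u1" and lip2: "norm d2 \<le> L2 * norm u2"
    and mono2: "0 \<le> inner u2 d2"
  shows "coeff1 * (norm u1)\<^sup>2 + coeff2 * (norm u2)\<^sup>2
           \<le> lam * ((norm d1)\<^sup>2 / (2 * L1) + (norm d2)\<^sup>2 / (2 * L2)) + ryu_form u1 u2 d1 d2"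
proof -
  txt \<open>The difference of the two sides is the sum of the six nonnegative terms below: the
    bounds \<open>\<gamma> \<le> \<gamma>\<^sub>0, \<gamma>\<^sub>1\<close> absorb \<open>-\<gamma> \<parallel>d\<^sub>i\<parallel>\<^sup>2\<close> into the cocoercivity terms, then come two
    Cauchy-Schwarz slacks and two Young inequalities.\<close>
  have "\<gamma> * (norm d1)\<^sup>2 \<le> lam / (2 * L1) * (norm d1)\<^sup>2"
    by (rule mult_right_mono[OF gamma_le_L1]) simp
  moreover have "(\<gamma> + \<alpha> / (2 * \<epsilon>2)) * (norm d2)\<^sup>2 \<le> lam / (2 * L2) * (norm d2)\<^sup>2"
    using gamma_le_L2 by (intro mult_right_mono) auto
  moreover have "0 \<le> (1 - \<alpha>) * (L1 * (norm u1)\<^sup>2 - inner u1 d1)"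
    using inner_le_of_norm_le[OF lip1] alpha_less_one by simp
  moreover have "0 \<le> (1 - \<alpha>) * inner u2 d2 + \<alpha> * (L2 * (norm u2)\<^sup>2 - inner u2 d2)"
    using inner_le_of_norm_le[OF lip2] mono2 alpha_pos alpha_less_one by simp
  moreover have "0 \<le> \<alpha> / 2 * (\<epsilon>2 * (norm u1)\<^sup>2 + 2 * inner u1 d2 + (norm d2)\<^sup>2 / \<epsilon>2)"
    using inner_le_young[OF eps2_pos, of u1 "- d2"] alpha_pos by simp
  moreover have "0 \<le> (1 - \<alpha>) * \<alpha> / (2 * \<gamma>) * (\<epsilon>1 * (norm u1)\<^sup>2 - 2 * inner u1 u2 + (norm u2)\<^sup>2 / \<epsilon>1)"
    using inner_le_young[OF eps1_pos, of u1 u2] alpha_pos alpha_less_one gamma_pos by simp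
  moreover have "lam * ((norm d1)\<^sup>2 / (2 * L1) + (norm d2)\<^sup>2 / (2 * L2)) + ryu_form u1 u2 d1 d2
        - (coeff1 * (norm u1)\<^sup>2 + coeff2 * (norm u2)\<^sup>2)
      = (lam / (2 * L1) * (norm d1)\<^sup>2 - \<gamma> * (norm d1)\<^sup>2)
        + (lam / (2 * L2) * (norm d2)\<^sup>2 - (\<gamma> + \<alpha> / (2 * \<epsilon>2)) * (norm d2)\<^sup>2)
        + (1 - \<alpha>) * (L1 * (norm u1)\<^sup>2 - inner u1 d1)
        + ((1 - \<alpha>) * inner u2 d2 + \<alpha> * (L2 * (norm u2)\<^sup>2 - inner u2 d2))
        + \<alpha> / 2 * (\<epsilon>2 * (norm u1)\<^sup>2 + 2 * inner u1 d2 + (norm d2)\<^sup>2 / \<epsilon>2)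
        + (1 - \<alpha>) * \<alpha> / (2 * \<gamma>) * (\<epsilon>1 * (norm u1)\<^sup>2 - 2 * inner u1 u2 + (norm u2)\<^sup>2 / \<epsilon>1)"
    unfolding ryu_form_def coeff1_def coeff2_def
    using gamma_pos eps1_pos eps2_pos L1_pos L2_pos by (simp add: field_simps)
  ultimately show ?thesis
    by linarith
qed

definition increment_const :: real where
  "increment_const = 2 + 4 * \<alpha>\<^sup>2 + 2 * \<gamma>\<^sup>2 * (L1\<^sup>2 + L2\<^sup>2)"

lemma increment_bound:
  fixes u1 u2 d1 d2 :: "'a::real_inner"
  assumes lip1: "norm d1 \<le> L1 * norm u1" and lip2: "norm d2 \<le> L2 * norm u2"
  shows "(norm (u1 + \<gamma> *\<^sub>R d1))\<^sup>2 + (norm (\<alpha> *\<^sub>R (u2 - u1) + \<gamma> *\<^sub>R d2))\<^sup>2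
           \<le> increment_const * ((norm u1)\<^sup>2 + (norm u2)\<^sup>2)"
proof -
  have "\<gamma>\<^sup>2 * (norm d1)\<^sup>2 \<le> \<gamma>\<^sup>2 * (L1\<^sup>2 * (norm u1)\<^sup>2)"
    using lip1 by (intro mult_left_mono) (auto simp: power_mult_distrib[symmetric] power_mono)
  moreover have "\<gamma>\<^sup>2 * (norm d2)\<^sup>2 \<le> \<gamma>\<^sup>2 * (L2\<^sup>2 * (norm u2)\<^sup>2)"
    using lip2 by (intro mult_left_mono) (auto simp: power_mult_distrib[symmetric] power_mono)
  moreover have "\<alpha>\<^sup>2 * (norm (u2 - u1))\<^sup>2 \<le> 2 * (\<alpha>\<^sup>2 * (norm u2)\<^sup>2) + 2 * (\<alpha>\<^sup>2 * (norm u1)\<^sup>2)"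
    using mult_left_mono[OF norm_add_power2_le[of u2 "- u1"], of "\<alpha>\<^sup>2"] by (simp add: algebra_simps)
  moreover have "(norm (u1 + \<gamma> *\<^sub>R d1))\<^sup>2 \<le> 2 * (norm u1)\<^sup>2 + 2 * (\<gamma>\<^sup>2 * (norm d1)\<^sup>2)"
    using norm_add_power2_le[of u1 "\<gamma> *\<^sub>R d1"] by (simp add: power_mult_distrib)
  moreover have "(norm (\<alpha> *\<^sub>R (u2 - u1) + \<gamma> *\<^sub>R d2))\<^sup>2
      \<le> 2 * (\<alpha>\<^sup>2 * (norm (u2 - u1))\<^sup>2) + 2 * (\<gamma>\<^sup>2 * (norm d2)\<^sup>2)"
    using norm_add_power2_le[of "\<alpha> *\<^sub>R (u2 - u1)" "\<gamma> *\<^sub>R d2"] by (simp add: power_mult_distrib)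
  moreover have "0 \<le> (norm u2)\<^sup>2" and "0 \<le> \<gamma>\<^sup>2 * (L2\<^sup>2 * (norm u1)\<^sup>2)"
    and "0 \<le> \<gamma>\<^sup>2 * (L1\<^sup>2 * (norm u2)\<^sup>2)"
    by simp_all
  moreover have "increment_const * ((norm u1)\<^sup>2 + (norm u2)\<^sup>2)
      = 2 * (norm u1)\<^sup>2 + 2 * (norm u2)\<^sup>2 + 4 * (\<alpha>\<^sup>2 * (norm u1)\<^sup>2) + 4 * (\<alpha>\<^sup>2 * (norm u2)\<^sup>2)
        + 2 * (\<gamma>\<^sup>2 * (L1\<^sup>2 * (norm u1)\<^sup>2)) + 2 * (\<gamma>\<^sup>2 * (L2\<^sup>2 * (norm u1)\<^sup>2))
        + 2 * (\<gamma>\<^sup>2 * (L1\<^sup>2 * (norm u2)\<^sup>2)) + 2 * (\<gamma>\<^sup>2 * (L2\<^sup>2 * (norm u2)\<^sup>2))"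
    unfolding increment_const_def by (simp add: algebra_simps)
  ultimately show ?thesis
    by linarith
qed

definition decrease_const :: real where
  "decrease_const = min coeff1 coeff2 / (lam * increment_const)"

lemma increment_const_pos: "0 < increment_const"
  unfolding increment_const_def by (simp add: add_pos_nonneg)

lemma decrease_const_pos: "0 < decrease_const"
  unfolding decrease_const_def
  using coeff1_pos coeff2_pos lam_pos increment_const_pos by simp

end

locale ryu_splitting = ryu_parameters +
  fixes f1 f2 :: "'a::euclidean_space \<Rightarrow> real" and g1 g2 :: "'a \<Rightarrow> 'a"
  assumes conv1: "convex_on UNIV f1" and conv2: "convex_on UNIV f2"
    and grad1: "\<And>x. (f1 has_derivative (\<lambda>h. inner (g1 x) h)) (at x)"
    and grad2: "\<And>x. (f2 has_derivative (\<lambda>h. inner (g2 x) h)) (at x)"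
    and lip1: "L1-lipschitz_on UNIV g1" and lip2: "L2-lipschitz_on UNIV g2"
begin

lemma prox_optimality:
  assumes x1: "x1 = prox f1 \<gamma> z1" and x2: "x2 = prox f2 (\<gamma> / \<alpha>) (z2 /\<^sub>R \<alpha> + x1)"
  shows "\<gamma> *\<^sub>R g1 x1 = z1 - x1" and "\<gamma> *\<^sub>R g2 x2 = z2 + \<alpha> *\<^sub>R x1 - \<alpha> *\<^sub>R x2"
proof -
  show "\<gamma> *\<^sub>R g1 x1 = z1 - x1"
    using prox_gradient_eq[OF conv1 grad1 gamma_pos] x1 by simp
  have "(\<gamma> / \<alpha>) *\<^sub>R g2 x2 = (z2 /\<^sub>R \<alpha> + x1) - x2"
    using prox_gradient_eq[OF conv2 grad2, of "\<gamma> / \<alpha>"] x2 gamma_pos alpha_pos by simp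
  then have "\<alpha> *\<^sub>R ((\<gamma> / \<alpha>) *\<^sub>R g2 x2) = \<alpha> *\<^sub>R ((z2 /\<^sub>R \<alpha> + x1) - x2)"
    by simp
  then show "\<gamma> *\<^sub>R g2 x2 = z2 + \<alpha> *\<^sub>R x1 - \<alpha> *\<^sub>R x2"
    using alpha_pos by (simp add: algebra_simps)
qed

lemma model_diff_lower_bound:
  fixes x1 x2 x1' x2' y :: 'a
  defines "u1 \<equiv> x1' - x1" and "u2 \<equiv> x2' - x2"
    and "d1 \<equiv> g1 x1' - g1 x1" and "d2 \<equiv> g2 x2' - g2 x2"
  assumes v1: "lam *\<^sub>R (y - x1) = u1 + \<gamma> *\<^sub>R d1" and v2: "lam *\<^sub>R (y - x2) = \<alpha> *\<^sub>R (u2 - u1) + \<gamma> *\<^sub>R d2"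
  shows "lam * ((norm d1)\<^sup>2 / (2 * L1) + (norm d2)\<^sup>2 / (2 * L2)) + ryu_form u1 u2 d1 d2
           \<le> lam * (ryu_model f1 g1 f2 g2 \<alpha> \<gamma> x1 x2 y - ryu_model f1 g1 f2 g2 \<alpha> \<gamma> x1' x2' y)"
proof -
  define B where "B = (f1 x1 - f1 x1' - inner (g1 x1') (x1 - x1')) + (f2 x2 - f2 x2' - inner (g2 x2') (x2 - x2'))"
  define R where "R = \<alpha> / (2 * \<gamma>) * (2 * inner (y - x1) u1 - (norm u1)\<^sup>2) - inner (y - x1) d1
    + (1 - \<alpha>) / (2 * \<gamma>) * (2 * inner (y - x2) u2 - (norm u2)\<^sup>2) - inner (y - x2) d2"
  have diff: "ryu_model f1 g1 f2 g2 \<alpha> \<gamma> x1 x2 y - ryu_model f1 g1 f2 g2 \<alpha> \<gamma> x1' x2' y = B + R"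
    using quadratic_model_diff[of f1 g1 "\<gamma> / \<alpha>" x1 y x1'] quadratic_model_diff[of f2 g2 "\<gamma> / (1 - \<alpha>)" x2 y x2']
      alpha_pos alpha_less_one
    by (simp add: ryu_model_def B_def R_def u1_def u2_def d1_def d2_def
        mult.commute[of _ \<alpha>] mult.commute[of _ "1 - \<alpha>"])
  have "(norm d1)\<^sup>2 / (2 * L1) \<le> f1 x1 - f1 x1' - inner (g1 x1') (x1 - x1')"
    using convex_lipschitz_gradient_cocoercive[OF conv1 grad1 lip1 L1_pos, of x1' x1]
    by (simp add: d1_def norm_minus_commute)
  moreover have "(norm d2)\<^sup>2 / (2 * L2) \<le> f2 x2 - f2 x2' - inner (g2 x2') (x2 - x2')"
    using convex_lipschitz_gradient_cocoercive[OF conv2 grad2 lip2 L2_pos, of x2' x2]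
    by (simp add: d2_def norm_minus_commute)
  ultimately have "lam * ((norm d1)\<^sup>2 / (2 * L1) + (norm d2)\<^sup>2 / (2 * L2)) \<le> lam * B"
    using lam_pos by (intro mult_left_mono) (simp_all add: B_def)
  moreover have "lam * R = ryu_form u1 u2 d1 d2"
    unfolding R_def by (rule lam_model_increment_eq_ryu_form[OF v1 v2])
  ultimately show ?thesis
    unfolding diff distrib_left by simp
qed

lemma model_decrease:
  fixes x1 x2 x1' x2' y z1 z2 z1' z2' :: 'a
  assumes opt: "\<gamma> *\<^sub>R g1 x1 = z1 - x1" "\<gamma> *\<^sub>R g2 x2 = z2 + \<alpha> *\<^sub>R x1 - \<alpha> *\<^sub>R x2"
    and opt': "\<gamma> *\<^sub>R g1 x1' = z1' - x1'" "\<gamma> *\<^sub>R g2 x2' = z2' + \<alpha> *\<^sub>R x1' - \<alpha> *\<^sub>R x2'"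
    and step: "z1' = z1 + lam *\<^sub>R (y - x1)" "z2' = z2 + lam *\<^sub>R (y - x2)"
  shows "ryu_model f1 g1 f2 g2 \<alpha> \<gamma> x1' x2' y
           + decrease_const * ((norm (z1' - z1))\<^sup>2 + (norm (z2' - z2))\<^sup>2)
         \<le> ryu_model f1 g1 f2 g2 \<alpha> \<gamma> x1 x2 y"
proof -
  define u1 u2 d1 d2 where "u1 = x1' - x1" and "u2 = x2' - x2"
    and "d1 = g1 x1' - g1 x1" and "d2 = g2 x2' - g2 x2"
  define N where "N = (norm (z1' - z1))\<^sup>2 + (norm (z2' - z2))\<^sup>2"
  have incr1: "z1' - z1 = u1 + \<gamma> *\<^sub>R d1" and incr2: "z2' - z2 = \<alpha> *\<^sub>R (u2 - u1) + \<gamma> *\<^sub>R d2"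
    using opt opt' by (simp_all add: u1_def u2_def d1_def d2_def algebra_simps)
  have lip_d1: "norm d1 \<le> L1 * norm u1" and lip_d2: "norm d2 \<le> L2 * norm u2"
    using lipschitz_onD[OF lip1, of x1' x1] lipschitz_onD[OF lip2, of x2' x2]
    by (simp_all add: u1_def u2_def d1_def d2_def dist_norm)
  have mono_d2: "0 \<le> inner u2 d2"
    using convex_gradient_monotone[OF conv2 grad2, of x2' x2] unfolding u2_def d2_def
    by (metis inner_commute)
  have "lam * (decrease_const * N) = min coeff1 coeff2 / increment_const * N"
    unfolding decrease_const_def using lam_pos by simp
  also have "\<dots> \<le> min coeff1 coeff2 * ((norm u1)\<^sup>2 + (norm u2)\<^sup>2)"
    using mult_left_mono[OF increment_bound[OF lip_d1 lip_d2], of "min coeff1 coeff2 / increment_const"]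
      coeff1_pos coeff2_pos increment_const_pos
    by (simp add: N_def incr1 incr2)
  also have "\<dots> \<le> coeff1 * (norm u1)\<^sup>2 + coeff2 * (norm u2)\<^sup>2"
    by (simp add: distrib_left add_mono mult_right_mono)
  also have "\<dots> \<le> lam * ((norm d1)\<^sup>2 / (2 * L1) + (norm d2)\<^sup>2 / (2 * L2)) + ryu_form u1 u2 d1 d2"
    by (rule ryu_form_lower_bound[OF lip_d1 lip_d2 mono_d2])
  also have "\<dots> \<le> lam * (ryu_model f1 g1 f2 g2 \<alpha> \<gamma> x1 x2 y - ryu_model f1 g1 f2 g2 \<alpha> \<gamma> x1' x2' y)"
    unfolding u1_def u2_def d1_def d2_def
    by (rule model_diff_lower_bound) (use incr1 incr2 step in \<open>simp_all add: u1_def u2_def d1_def d2_def\<close>)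
  finally show ?thesis
    using lam_pos by (simp add: N_def)
qed

lemma envelope_decrease:
  assumes x1: "x1 = prox f1 \<gamma> z1" and x2: "x2 = prox f2 (\<gamma> / \<alpha>) (z2 /\<^sub>R \<alpha> + x1)"
    and x3: "x3 \<in> prox_set f3 \<gamma> (x1 - z1 + x2 - z2)"
    and x1': "x1' = prox f1 \<gamma> z1'" and x2': "x2' = prox f2 (\<gamma> / \<alpha>) (z2' /\<^sub>R \<alpha> + x1')"
    and step: "z1' = z1 + lam *\<^sub>R (x3 - x1)" "z2' = z2 + lam *\<^sub>R (x3 - x2)"
  shows "ryu_envelope f1 g1 f2 g2 f3 \<alpha> \<gamma> z1' z2'
           + ereal (decrease_const * ((norm (z1' - z1))\<^sup>2 + (norm (z2' - z2))\<^sup>2))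
         \<le> ryu_envelope f1 g1 f2 g2 f3 \<alpha> \<gamma> z1 z2"
proof -
  let ?Q = "ryu_model f1 g1 f2 g2 \<alpha> \<gamma> x1 x2" and ?Q' = "ryu_model f1 g1 f2 g2 \<alpha> \<gamma> x1' x2'"
  let ?D = "decrease_const * ((norm (z1' - z1))\<^sup>2 + (norm (z2' - z2))\<^sup>2)"
  note opt = prox_optimality[OF x1 x2] and opt' = prox_optimality[OF x1' x2']
  have "\<exists>C. \<forall>y. ?Q y = (norm (y - (x1 - z1 + x2 - z2)))\<^sup>2 / (2 * \<gamma>) + C"
    by (rule ryu_model_eq_shifted_square) (use gamma_pos alpha_pos alpha_less_one opt in auto)
  then obtain C where "\<forall>y. ?Q y = (norm (y - (x1 - z1 + x2 - z2)))\<^sup>2 / (2 * \<gamma>) + C" ..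
  then have env: "ryu_envelope f1 g1 f2 g2 f3 \<alpha> \<gamma> z1 z2 = f3 x3 + ereal (?Q x3)"
    using prox_set_attains_INF[OF x3] ryu_envelope_eq_INF_model[OF x1 x2] by simp
  have "ryu_envelope f1 g1 f2 g2 f3 \<alpha> \<gamma> z1' z2' + ereal ?D \<le> f3 x3 + ereal (?Q' x3) + ereal ?D"
    unfolding ryu_envelope_eq_INF_model[OF x1' x2'] by (intro add_right_mono INF_lower) simp
  also have "\<dots> = f3 x3 + ereal (?Q' x3 + ?D)"
    by (simp add: add.assoc)
  also have "\<dots> \<le> f3 x3 + ereal (?Q x3)"
    using model_decrease[OF opt opt' step] by (intro add_left_mono) simp
  finally show ?thesis
    unfolding env .
qed

end

lemma half_lam_le_ryu_alpha_threshold: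
  assumes "0 \<le> lam" and "lam \<le> 2"
  shows "lam / 2 \<le> (2 * lam - 3 + sqrt (9 - 4 * lam)) / 2"
proof -
  have "lam * lam \<le> 2 * lam"
    using assms by (intro mult_right_mono) auto
  then have "3 - lam \<le> sqrt (9 - 4 * lam)"
    by (intro real_le_rsqrt) (simp add: power2_eq_square algebra_simps)
  then show ?thesis by simp
qed

theorem theorem1:
  fixes f1 f2 :: "'a::euclidean_space \<Rightarrow> real"
    and g1 g2 :: "'a \<Rightarrow> 'a"
    and f3 :: "'a \<Rightarrow> ereal"
    and L1 L2 lam \<alpha> \<gamma> \<epsilon>1 \<epsilon>2 :: real
  assumes conv1: "convex_on UNIV f1" and conv2: "convex_on UNIV f2"
    and grad1: "\<And>x. (f1 has_derivative (\<lambda>h. inner (g1 x) h)) (at x)"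
    and grad2: "\<And>x. (f2 has_derivative (\<lambda>h. inner (g2 x) h)) (at x)"
    and L1_pos: "L1 > 0" and L2_pos: "L2 > 0"
    and lip1: "L1-lipschitz_on UNIV g1" and lip2: "L2-lipschitz_on UNIV g2"
    and proper3: "proper_fun f3" and lsc3: "lsc_fun f3"
    and minimizer: "\<exists>x. \<forall>y. ereal (f1 x) + ereal (f2 x) + f3 x \<le> ereal (f1 y) + ereal (f2 y) + f3 y"
    and lam: "0 < lam" "lam < 2"
    and alpha: "(2 * lam - 3 + sqrt (9 - 4 * lam)) / 2 < \<alpha>" "\<alpha> < 1"
    and eps1: "\<alpha> / (2 * \<alpha> - lam) < \<epsilon>1" "\<epsilon>1 < (2 - lam) / (1 - \<alpha>)"
    and eps2: "\<alpha> * L2 / lam < \<epsilon>2"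
    and gam: "\<gamma> \<in> ryu_Gamma lam \<alpha> L1 L2 \<epsilon>1 \<epsilon>2"
  shows "\<exists>M>0. \<forall>z1 z2 x1 x2 x3 :: nat \<Rightarrow> 'a.
           (\<forall>k. x1 k = prox f1 \<gamma> (z1 k)
              \<and> x2 k = prox f2 (\<gamma> / \<alpha>) (z2 k /\<^sub>R \<alpha> + x1 k)
              \<and> x3 k \<in> prox_set f3 \<gamma> (x1 k - z1 k + x2 k - z2 k)
              \<and> z1 (Suc k) = z1 k + lam *\<^sub>R (x3 k - x1 k)
              \<and> z2 (Suc k) = z2 k + lam *\<^sub>R (x3 k - x2 k))
           \<longrightarrow> (\<forall>k. ryu_envelope f1 g1 f2 g2 f3 \<alpha> \<gamma> (z1 k) (z2 k)
                   \<ge> ryu_envelope f1 g1 f2 g2 f3 \<alpha> \<gamma> (z1 (Suc k)) (z2 (Suc k))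
                     + ereal (M * ((norm (z1 (Suc k) - z1 k))\<^sup>2 + (norm (z2 (Suc k) - z2 k))\<^sup>2)))"
proof -
  have "lam < 2 * \<alpha>"
    using half_lam_le_ryu_alpha_threshold[of lam] lam alpha(1) by linarith
  then have "0 < \<alpha>"
    using lam by linarith
  moreover have "0 < \<epsilon>1"
    using divide_pos_pos[of \<alpha> "2 * \<alpha> - lam"] \<open>0 < \<alpha>\<close> \<open>lam < 2 * \<alpha>\<close> eps1(1) by linarith
  moreover have "0 < \<epsilon>2"
    using divide_pos_pos[OF mult_pos_pos[OF \<open>0 < \<alpha>\<close> L2_pos] lam(1)] eps2 by linarith
  ultimately interpret ryu_splitting lam \<alpha> \<gamma> \<epsilon>1 \<epsilon>2 L1 L2 f1 f2 g1 g2
    using lam(1) alpha(2) L1_pos L2_pos gam conv1 conv2 grad1 grad2 lip1 lip2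
    by unfold_locales auto
  show ?thesis
    using decrease_const_pos by (blast intro: envelope_decrease)
qed

end
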